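(* Let $V=\bigoplus_{i<0}V_i$ be a finite-dimensional graded $\mathbb K$-vector space and $\mathfrak g\subset\mathfrak{gl}(V)$ a reductive Lie subalgebra with $\mathfrak g=\bigoplus_k\mathfrak g_k$, $\mathfrak g_k=\mathfrak g\cap\mathfrak{gl}(V)_k$. Let $0\ne\delta\in\mathfrak g_{-1}$, $\mathfrak m=\mathbb K\delta$, and let $H\in\mathfrak g_0$, $Y\in\mathfrak g_1$ satisfy $[H,\delta]=2\delta$, $[H,Y]=-2Y$, $[\delta,Y]=H$ (such elements exist). Then $\mathfrak s=\operatorname{span}\{\delta,H,Y\}\cong\mathfrak{sl}_2$ is contained in $\mathfrak u(\mathfrak m)$, and $\mathfrak u(\mathfrak m)$ is the semidirect sum of $\mathfrak s$ and the ideal $\mathfrak n_{\max}(\mathfrak m)$; in particular $\dim\mathfrak u(\mathfrak m)/\mathfrak n_{\max}(\mathfrak m)=3$, $\mathfrak n_{\max}(\mathfrak m)$ is an $\mathfrak{sl}_2$-module (under $\operatorname{ad}\mathfrak s$), and $\mathfrak n_{\max}(\mathfrak m)=\mathfrak n_{ne}(\mathfrak m)$.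
   Context: $\mathfrak{gl}(V)_k=\bigoplus_i\operatorname{Hom}(V_i,V_{i+k})$. Universal algebraic prolongation: $\mathfrak u_{-1}=\mathfrak m$, $\mathfrak u_k=\{X\in\mathfrak g_k:[X,\delta']\in\mathfrak u_{k-1}\ \forall\delta'\in\mathfrak m\}$ for $k\ge0$, $\mathfrak u(\mathfrak m)=\bigoplus_{k\ge-1}\mathfrak u_k$ (a graded subalgebra of $\mathfrak g$). $\mathfrak n_{\max}(\mathfrak m)$ is the largest ideal of $\mathfrak u(\mathfrak m)$ contained in $\bigoplus_{i\ge0}\mathfrak u_i$. Let $V^i=\bigoplus_{j\ge i}V_j$ and let $\Gamma$ be the curve $t\mapsto\{e^{t\delta}V^i\}_i$ in the corresponding flag manifold of $V$; each $X\in\mathfrak{gl}(V)$ induces a vector field on that flag manifold, and $\mathfrak u(\mathfrak m)$ consists of elements whose vector fields are tangent to $\Gamma$. $\mathfrak n_{ne}(\mathfrak m)$ (non-effectiveness ideal) is the set of $X\in\mathfrak u(\mathfrak m)$ whose induced vector field vanishes identically along $\Gamma$. *)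

theory Defs
  imports "HOL-Analysis.Finite_Cartesian_Product"
begin

text \<open>
  Model: V = K^n with a basis of homogeneous vectors; the basis vector e_j has degree
  deg j (all degrees negative).  gl(V) is the space of n x n matrices 'a^'n^'n, where
  the entry A$i$j is the coefficient of e_i in A e_j.
\<close>

type_synonym ('a,'n) gl = "'a^'n^'n"

definition scaleM :: "'a::times \<Rightarrow> 'a^'n^'n \<Rightarrow> 'a^'n^'n" where
  "scaleM c A = (\<chi> i j. c * A$i$j)"

definition bracket :: "'a::ring_1^'n^'n \<Rightarrow> 'a^'n^'n \<Rightarrow> 'a^'n^'n" where
  "bracket A B = A ** B - B ** A"

definition mpow :: "'a::semiring_1^'n^'n \<Rightarrow> nat \<Rightarrow> 'a^'n^'n" where
  "mpow A k = ((\<lambda>B. A ** B) ^^ k) (mat 1)"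

text \<open>Exponential e^{tA}; for the nilpotent matrices used here (A^(CARD('n)) = 0) this
  truncated series is the exact exponential.\<close>
definition expM :: "'a::field_char_0 \<Rightarrow> 'a^'n::finite^'n \<Rightarrow> 'a^'n^'n" where
  "expM t A = (\<Sum>k<CARD('n). scaleM (t^k / fact k) (mpow A k))"

definition homog :: "('n \<Rightarrow> int) \<Rightarrow> int \<Rightarrow> 'a::zero^'n^'n \<Rightarrow> bool" where
  "homog deg k A \<longleftrightarrow> (\<forall>i j. A$i$j \<noteq> 0 \<longrightarrow> deg i = deg j + k)"

definition comp :: "('n \<Rightarrow> int) \<Rightarrow> int \<Rightarrow> 'a::zero^'n^'n \<Rightarrow> 'a^'n^'n" where
  "comp deg k A = (\<chi> i j. if deg i = deg j + k then A$i$j else 0)"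

definition msubspace :: "('a::ring_1^'n^'n) set \<Rightarrow> bool" where
  "msubspace S \<longleftrightarrow> 0 \<in> S \<and> (\<forall>A\<in>S. \<forall>B\<in>S. A + B \<in> S) \<and> (\<forall>c. \<forall>A\<in>S. scaleM c A \<in> S)"

definition lie_subalgebra :: "('a::ring_1^'n^'n) set \<Rightarrow> bool" where
  "lie_subalgebra L \<longleftrightarrow> msubspace L \<and> (\<forall>A\<in>L. \<forall>B\<in>L. bracket A B \<in> L)"

definition lie_ideal :: "('a::ring_1^'n^'n) set \<Rightarrow> ('a^'n^'n) set \<Rightarrow> bool" where
  "lie_ideal L I \<longleftrightarrow> msubspace I \<and> I \<subseteq> L \<and> (\<forall>A\<in>L. \<forall>B\<in>I. bracket A B \<in> I)"

text \<open>Reductive: the adjoint representation is completely reducible, i.e. every ideal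
  has a complementary ideal.\<close>
definition reductive :: "('a::ring_1^'n^'n) set \<Rightarrow> bool" where
  "reductive L \<longleftrightarrow> lie_subalgebra L \<and>
     (\<forall>I. lie_ideal L I \<longrightarrow> (\<exists>J. lie_ideal L J \<and> I \<inter> J = {0} \<and> {A + B |A B. A \<in> I \<and> B \<in> J} = L))"

text \<open>g is graded: g = \<Oplus>_k g_k with g_k = g \<inter> gl(V)_k.\<close>
definition graded_sub :: "('n \<Rightarrow> int) \<Rightarrow> ('a::ring_1^'n^'n) set \<Rightarrow> bool" where
  "graded_sub deg L \<longleftrightarrow> (\<forall>A\<in>L. \<forall>k. comp deg k A \<in> L)"

definition line :: "'a::ring_1^'n^'n \<Rightarrow> ('a^'n^'n) set" where
  "line d = {scaleM c d |c. True}"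

text \<open>Universal algebraic prolongation inside g: prol deg g d k = u_{k-1}.\<close>
fun prol :: "('n \<Rightarrow> int) \<Rightarrow> ('a::ring_1^'n^'n) set \<Rightarrow> 'a^'n^'n \<Rightarrow> nat \<Rightarrow> ('a^'n^'n) set" where
  "prol deg g d 0 = line d"
| "prol deg g d (Suc k) =
     {X \<in> g. homog deg (int k) X \<and> (\<forall>d'\<in>line d. bracket X d' \<in> prol deg g d k)}"

definition uk :: "('n \<Rightarrow> int) \<Rightarrow> ('a::ring_1^'n^'n) set \<Rightarrow> 'a^'n^'n \<Rightarrow> int \<Rightarrow> ('a^'n^'n) set" where
  "uk deg g d k = prol deg g d (nat (k + 1))"

definition umax :: "('n \<Rightarrow> int) \<Rightarrow> ('a::ring_1^'n^'n) set \<Rightarrow> 'a^'n^'n \<Rightarrow> ('a^'n^'n) set" where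
  "umax deg g d = {X. (\<forall>k. k < -1 \<longrightarrow> comp deg k X = 0) \<and> (\<forall>k\<ge>-1. comp deg k X \<in> uk deg g d k)}"

text \<open>n_max(m): the largest ideal of u(m) contained in \<Oplus>_{i\<ge>0} u_i
  (the union of all such ideals, which is itself such an ideal).\<close>
definition nmax :: "('n \<Rightarrow> int) \<Rightarrow> ('a::ring_1^'n^'n) set \<Rightarrow> 'a^'n^'n \<Rightarrow> ('a^'n^'n) set" where
  "nmax deg g d = \<Union>{I. lie_ideal (umax deg g d) I \<and>
       I \<subseteq> {X \<in> umax deg g d. \<forall>k<0. comp deg k X = 0}}"

definition filt :: "('n \<Rightarrow> int) \<Rightarrow> int \<Rightarrow> ('a::zero^'n) set" where
  "filt deg i = {v. \<forall>j. deg j < i \<longrightarrow> v$j = 0}"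

text \<open>n_ne(m): elements of u(m) whose induced vector field on the flag manifold vanishes
  along the curve t \<mapsto> {e^{t delta} V^i}_i, i.e. which preserve every flag of the curve.\<close>
definition nne :: "('n::finite \<Rightarrow> int) \<Rightarrow> ('a::field_char_0^'n^'n) set \<Rightarrow> 'a^'n^'n \<Rightarrow> ('a^'n^'n) set" where
  "nne deg g d = {X \<in> umax deg g d. \<forall>t i. \<forall>v \<in> (\<lambda>w. expM t d *v w) ` filt deg i.
       X *v v \<in> (\<lambda>w. expM t d *v w) ` filt deg i}"

end

theory Submission
  imports Defs
begin

text \<open>
  Proof strategy.  Write ad for the map X \<mapsto> [\<delta>, X] and ad^m for its iterates.

  (1) The prolongation u_{m-1} consists of the X \<in> g, homogeneous of degree m-1, with
      ad^m X \<in> K\<delta>.  Its subspace N_m = {X \<in> u_{m-1}. ad^m X = 0} satisfies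
      [u_{a-1}, N_b] \<subseteq> N_{a+b-1} (induction on a+b using the Jacobi identity), so the
      graded space N = \<Oplus>_{k\<ge>0} N_{k+1} is an ideal of u(m) in non-negative degrees;
      conversely every such ideal lies in N, hence n_max(m) = N.
  (2) The sl_2 relations give formulas for [H, ad^n Z] and [Y, ad^{n+1} Z].  They show that
      a homogeneous Z of degree n-1 \<ge> 2 with ad^n Z = c\<delta> can be lifted to degree n with
      the same value c; since degrees are bounded, c = 0.  So u_k = N_{k+1} for k \<ge> 2, while
      u_0 and u_1 are spanned modulo N by H and Y; this yields u(m) = span{\<delta>,H,Y} \<oplus> N.
  (3) X e^{t\<delta>} = e^{t\<delta>} F_t(X) with F_t(X) = \<Sum>_n (-t)^n/n! ad^n X.  Hence X preserves
      the flags of the curve iff no F_t(X) has components of negative degree.  This holds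
      on N, while the degree -1 component of F_t(a\<delta>+bH+cY) is (a + 2bt - ct^2)\<delta>; so
      n_ne(m) = N as well.
\<close>

lemma scaleM_nth [simp]: "scaleM c A $ i $ j = c * A $ i $ j"
  by (simp add: scaleM_def)

lemma mm_nth: "(A ** B) $ i $ j = (\<Sum>k\<in>UNIV. A$i$k * B$k$j)"
  by (simp add: matrix_matrix_mult_def)

lemma mm_add_r: "((A::'a::semiring_1^'n^'n) + B) ** C = A ** C + B ** C"
  by (simp add: vec_eq_iff matrix_matrix_mult_def sum.distrib distrib_right)
lemma mm_diff_r: "((A::'a::ring_1^'n^'n) - B) ** C = A ** C - B ** C"
  by (simp add: vec_eq_iff matrix_matrix_mult_def sum_subtractf left_diff_distrib)
lemma mm_diff_l: "(A::'a::ring_1^'n^'n) ** (B - C) = A ** B - A ** C"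
  by (simp add: vec_eq_iff matrix_matrix_mult_def sum_subtractf right_diff_distrib)
lemma mm_scale_r: "scaleM c (A::'a::comm_ring_1^'n^'n) ** C = scaleM c (A ** C)"
  by (simp add: vec_eq_iff matrix_matrix_mult_def sum_distrib_left mult.assoc)
lemma mm_scale_l: "(A::'a::comm_ring_1^'n^'n) ** scaleM c C = scaleM c (A ** C)"
  by (simp add: vec_eq_iff matrix_matrix_mult_def sum_distrib_left mult.left_commute)
lemma mm_sum_r: "(\<Sum>x\<in>S. (f x::'a::semiring_1^'n^'n)) ** C = (\<Sum>x\<in>S. f x ** C)"
  by (induction S rule: infinite_finite_induct) (simp_all add: mm_add_r)
lemma mm_sum_l: "(C::'a::semiring_1^'n^'n) ** (\<Sum>x\<in>S. f x) = (\<Sum>x\<in>S. C ** f x)"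
  by (induction S rule: infinite_finite_induct) (simp_all add: matrix_add_ldistrib)

lemma scaleM_add: "scaleM c (A + B) = scaleM c A + scaleM (c::'a::comm_ring_1) B"
  by (simp add: vec_eq_iff distrib_left)
lemma scaleM_diff: "scaleM c (A - B) = scaleM c A - scaleM (c::'a::comm_ring_1) B"
  by (simp add: vec_eq_iff right_diff_distrib)
lemma scaleM_add_left: "scaleM (a + b) A = scaleM a A + scaleM (b::'a::comm_ring_1) A"
  by (simp add: vec_eq_iff distrib_right)
lemma scaleM_scaleM [simp]: "scaleM a (scaleM b A) = scaleM (a * b) (A::'a::comm_ring_1^'n^'n)"
  by (simp add: vec_eq_iff mult.assoc)
lemma scaleM_one [simp]: "scaleM 1 (A::'a::comm_ring_1^'n^'n) = A"
  by (simp add: vec_eq_iff)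
lemma scaleM_zero [simp]: "scaleM 0 (A::'a::comm_ring_1^'n^'n) = 0"
  by (simp add: vec_eq_iff)
lemma scaleM_zero_r [simp]: "scaleM c (0::'a::comm_ring_1^'n^'n) = 0"
  by (simp add: vec_eq_iff)
lemma scaleM_minus_one: "scaleM (-1) (A::'a::comm_ring_1^'n^'n) = - A"
  by (simp add: vec_eq_iff)
lemma scaleM_sum: "scaleM c (\<Sum>x\<in>S. f x) = (\<Sum>x\<in>S. scaleM (c::'a::comm_ring_1) (f x))"
  by (induction S rule: infinite_finite_induct) (simp_all add: scaleM_add)
lemma scaleM_sum_left: "scaleM (\<Sum>x\<in>S. f x) A = (\<Sum>x\<in>S. scaleM (f x) (A::'a::comm_ring_1^'n^'n))"
  by (induction S rule: infinite_finite_induct) (simp_all add: scaleM_add_left)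
lemma scaleM_eq_0_iff: "scaleM c (A::'a::field^'n^'n) = 0 \<longleftrightarrow> c = 0 \<or> A = 0"
  by (auto simp: vec_eq_iff)

lemma bracket_add_l: "bracket (A + B) C = bracket A C + bracket (B::'a::ring_1^'n^'n) C"
  by (simp add: bracket_def mm_add_r matrix_add_ldistrib algebra_simps)
lemma bracket_add_r: "bracket C (A + B) = bracket C A + bracket C (B::'a::ring_1^'n^'n)"
  by (simp add: bracket_def mm_add_r matrix_add_ldistrib algebra_simps)
lemma bracket_diff_r: "bracket C (A - B) = bracket C A - bracket C (B::'a::ring_1^'n^'n)"
  by (simp add: bracket_def mm_diff_r mm_diff_l algebra_simps)
lemma bracket_scale_l: "bracket (scaleM c A) C = scaleM c (bracket (A::'a::comm_ring_1^'n^'n) C)"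
  by (simp add: bracket_def mm_scale_r mm_scale_l scaleM_diff)
lemma bracket_scale_r: "bracket C (scaleM c A) = scaleM c (bracket C (A::'a::comm_ring_1^'n^'n))"
  by (simp add: bracket_def mm_scale_r mm_scale_l scaleM_diff)
lemma bracket_zero_l [simp]: "bracket 0 (A::'a::ring_1^'n^'n) = 0"
  by (simp add: bracket_def)
lemma bracket_zero_r [simp]: "bracket A (0::'a::ring_1^'n^'n) = 0"
  by (simp add: bracket_def)
lemma bracket_neg_l: "bracket (- A) C = - bracket (A::'a::comm_ring_1^'n^'n) C"
  by (metis bracket_scale_l scaleM_minus_one)
lemma bracket_self [simp]: "bracket A (A::'a::ring_1^'n^'n) = 0"
  by (simp add: bracket_def)
lemma bracket_antisym: "bracket B A = - bracket A (B::'a::ring_1^'n^'n)"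
  by (simp add: bracket_def)
lemma jacobi:
  "bracket A (bracket B C) = bracket (bracket A B) C + bracket B (bracket A (C::'a::ring_1^'n^'n))"
  by (simp add: bracket_def mm_diff_r mm_diff_l matrix_mul_assoc algebra_simps)
lemma bracket_sum_l: "bracket (\<Sum>x\<in>S. f x) (C::'a::ring_1^'n^'n) = (\<Sum>x\<in>S. bracket (f x) C)"
  by (induction S rule: infinite_finite_induct) (simp_all add: bracket_add_l)
lemma bracket_sum_r: "bracket C (\<Sum>x\<in>S. f x) = (\<Sum>x\<in>S. bracket C (f x::'a::ring_1^'n^'n))"
  by (induction S rule: infinite_finite_induct) (simp_all add: bracket_add_r)

lemma comp_nth [simp]: "comp deg k A $ i $ j = (if deg i = deg j + k then A$i$j else 0)"
  by (simp add: comp_def)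

lemma homog_comp: "homog deg k (comp deg k A)"
  by (simp add: homog_def)

lemma comp_of_homog:
  assumes "homog deg j A"
  shows "comp deg k A = (if k = j then A else 0)"
  unfolding vec_eq_iff
proof (intro allI)
  fix i l
  show "comp deg k A $ i $ l = (if k = j then A else 0) $ i $ l"
  proof (cases "A$i$l = 0")
    case False
    then have "deg i = deg l + j" using assms unfolding homog_def by blast
    then show ?thesis by simp
  qed simp
qed

lemma comp_add: "comp deg k (A + B) = comp deg k A + comp deg k (B::'a::ring_1^'n^'n)"
  by (simp add: vec_eq_iff)
lemma comp_diff: "comp deg k (A - B) = comp deg k A - comp deg k (B::'a::ring_1^'n^'n)"
  by (simp add: vec_eq_iff)
lemma comp_scale: "comp deg k (scaleM c A) = scaleM c (comp deg k (A::'a::comm_ring_1^'n^'n))"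
  by (simp add: vec_eq_iff)
lemma comp_zero [simp]: "comp deg k (0::'a::ring_1^'n^'n) = 0"
  by (simp add: vec_eq_iff)
lemma comp_sum: "comp deg k (\<Sum>x\<in>S. f x) = (\<Sum>x\<in>S. comp deg k (f x::'a::ring_1^'n^'n))"
  by (induction S rule: infinite_finite_induct) (simp_all add: comp_add)

lemma homog_zero [simp]: "homog deg k 0"
  by (simp add: homog_def)
lemma homog_add: "homog deg k A \<Longrightarrow> homog deg k B \<Longrightarrow> homog deg k (A + (B::'a::ring_1^'n^'n))"
  unfolding homog_def by simp (metis add.left_neutral add.right_neutral)
lemma homog_scale: "homog deg k A \<Longrightarrow> homog deg k (scaleM c (A::'a::comm_ring_1^'n^'n))"
  unfolding homog_def by (metis mult_zero_right scaleM_nth)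

lemma homog_mm:
  assumes "homog deg j A" "homog deg k B"
  shows "homog deg (j + k) (A ** (B::'a::ring_1^'n^'n))"
  unfolding homog_def
proof (intro allI impI)
  fix i l assume "(A ** B) $ i $ l \<noteq> 0"
  then obtain m where "A$i$m * B$m$l \<noteq> 0"
    unfolding mm_nth by (rule sum.not_neutral_contains_not_neutral)
  then have "A$i$m \<noteq> 0" "B$m$l \<noteq> 0" by auto
  with assms show "deg i = deg l + (j + k)" unfolding homog_def by force
qed

lemma homog_bracket:
  "homog deg j A \<Longrightarrow> homog deg k B \<Longrightarrow> homog deg (j + k) (bracket A (B::'a::ring_1^'n^'n))"
proof -
  assume "homog deg j A" "homog deg k B"
  then have "homog deg (j + k) (A ** B)" "homog deg (j + k) (B ** A)"
    using homog_mm[of deg j A k B] homog_mm[of deg k B j A] by (simp_all add: add.commute)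
  then show ?thesis
    unfolding bracket_def homog_def by simp (metis diff_zero diff_self eq_iff_diff_eq_0)
qed

lemma sum_comp:
  assumes "finite S" "\<And>i j. deg i - deg j \<in> S"
  shows "(\<Sum>k\<in>S. comp deg k A) = (A::'a::ring_1^'n^'n)"
  unfolding vec_eq_iff
proof (intro allI)
  fix i l
  have "(\<Sum>k\<in>S. comp deg k A) $ i $ l = (\<Sum>k\<in>S. if k = deg i - deg l then A$i$l else 0)"
    by (simp add: sum_component) (rule sum.cong; auto)
  then show "(\<Sum>k\<in>S. comp deg k A) $ i $ l = A $ i $ l"
    using assms by (simp add: sum.delta)
qed

lemma comp_bracket_homog:
  assumes A: "homog deg j A"
  shows "comp deg k (bracket A B) = bracket A (comp deg (k - j) (B::'a::ring_1^'n^'n))"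
proof -
  define S where "S = insert (k - j) ((\<lambda>(i, l). deg i - deg l) ` UNIV)"
  have S: "finite S" "\<And>i l. deg i - deg l \<in> S" by (auto simp: S_def)
  have "bracket A B = (\<Sum>l\<in>S. bracket A (comp deg l B))"
    by (simp only: sum_comp[OF S] bracket_sum_r[symmetric])
  then have "comp deg k (bracket A B) = (\<Sum>l\<in>S. comp deg k (bracket A (comp deg l B)))"
    by (simp add: comp_sum)
  also have "\<dots> = (\<Sum>l\<in>S. if l = k - j then bracket A (comp deg l B) else 0)"
    using comp_of_homog[OF homog_bracket[OF A homog_comp]] by (intro sum.cong) auto
  also have "\<dots> = bracket A (comp deg (k - j) B)"
    using S by (simp add: sum.delta S_def)
  finally show ?thesis .
qed

lemma zero_if_comps:
  assumes "\<And>k. comp deg k A = 0"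
  shows "(A::'a::zero^'n^'n) = 0"
  unfolding vec_eq_iff
proof (intro allI)
  fix i j
  have "comp deg (deg i - deg j) A $ i $ j = A$i$j" by simp
  then show "A$i$j = 0$i$j" using assms by simp
qed

definition spread :: "('n::finite \<Rightarrow> int) \<Rightarrow> nat" where
  "spread deg = nat (Max ((\<lambda>(i, j). \<bar>deg i - deg j\<bar>) ` UNIV))"

lemma spread_bound: "\<bar>deg i - deg j\<bar> \<le> int (spread deg)"
proof -
  have "\<bar>deg i - deg j\<bar> \<le> Max ((\<lambda>(i, j). \<bar>deg i - deg j\<bar>) ` UNIV)"
    by (rule Max_ge) (auto intro: image_eqI[of _ _ "(i, j)"])
  then show ?thesis unfolding spread_def by linarith
qed

lemma homog_big_zero:
  assumes "homog deg k A" "int (spread deg) < \<bar>k\<bar>"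
  shows "A = 0"
  unfolding vec_eq_iff
proof (intro allI)
  fix i l
  show "A$i$l = 0$i$l"
  proof (rule ccontr)
    assume "A$i$l \<noteq> 0$i$l"
    then have "deg i - deg l = k" using assms(1) unfolding homog_def by simp
    then show False using assms(2) spread_bound[of deg i l] by simp
  qed
qed

lemma msub_zero: "msubspace S \<Longrightarrow> 0 \<in> S"
  by (simp add: msubspace_def)
lemma msub_add: "msubspace S \<Longrightarrow> A \<in> S \<Longrightarrow> B \<in> S \<Longrightarrow> A + B \<in> S"
  by (simp add: msubspace_def)
lemma msub_scale: "msubspace S \<Longrightarrow> A \<in> S \<Longrightarrow> scaleM c A \<in> S"
  by (simp add: msubspace_def)
lemma msub_neg: "msubspace S \<Longrightarrow> A \<in> S \<Longrightarrow> - (A::'a::comm_ring_1^'n^'n) \<in> S"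
  by (metis msub_scale scaleM_minus_one)
lemma msub_diff: "msubspace S \<Longrightarrow> A \<in> S \<Longrightarrow> B \<in> S \<Longrightarrow> A - (B::'a::comm_ring_1^'n^'n) \<in> S"
  by (metis msub_add msub_neg diff_conv_add_uminus)
lemma msub_sum: "msubspace S \<Longrightarrow> (\<And>x. x \<in> T \<Longrightarrow> f x \<in> S) \<Longrightarrow> (\<Sum>x\<in>T. f x) \<in> S"
  by (induction T rule: infinite_finite_induct) (auto simp: msub_zero msub_add)
lemma msub_single0: "msubspace {0::'a::comm_ring_1^'n^'n}"
  by (simp add: msubspace_def)

definition ad_pow :: "'a::ring_1^'n^'n \<Rightarrow> nat \<Rightarrow> 'a^'n^'n \<Rightarrow> 'a^'n^'n" where
  "ad_pow d m X = ((\<lambda>Z. bracket d Z) ^^ m) X"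

lemma ad_pow_0 [simp]: "ad_pow d 0 X = X"
  by (simp add: ad_pow_def)
lemma ad_pow_Suc: "ad_pow d (Suc m) X = bracket d (ad_pow d m X)"
  by (simp add: ad_pow_def)
lemma ad_pow_Suc': "ad_pow d (Suc m) X = ad_pow d m (bracket d X)"
  by (simp add: ad_pow_def funpow_Suc_right del: funpow.simps)
lemma ad_pow_add_nat: "ad_pow d (m + k) X = ad_pow d m (ad_pow d k X)"
  by (simp add: ad_pow_def funpow_add)
lemma ad_pow_add: "ad_pow d m (A + B) = ad_pow d m A + ad_pow d m (B::'a::ring_1^'n^'n)"
  by (induction m) (simp_all add: ad_pow_Suc bracket_add_r)
lemma ad_pow_diff: "ad_pow d m (A - B) = ad_pow d m A - ad_pow d m (B::'a::ring_1^'n^'n)"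
  by (induction m) (simp_all add: ad_pow_Suc bracket_diff_r)
lemma ad_pow_scale: "ad_pow d m (scaleM c A) = scaleM c (ad_pow d m (A::'a::comm_ring_1^'n^'n))"
  by (induction m) (simp_all add: ad_pow_Suc bracket_scale_r)
lemma ad_pow_zero [simp]: "ad_pow d m (0::'a::ring_1^'n^'n) = 0"
  by (induction m) (simp_all add: ad_pow_Suc)

locale lowering =
  fixes deg :: "'n::finite \<Rightarrow> int" and d :: "'a::field_char_0^'n^'n"
  assumes dh: "homog deg (-1) d"
begin

lemma comp_ad_pow: "comp deg j (ad_pow d n X) = ad_pow d n (comp deg (j + int n) X)"
proof (induction n arbitrary: j)
  case (Suc n)
  show ?case by (simp add: ad_pow_Suc comp_bracket_homog[OF dh] Suc ac_simps)
qed simp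

lemma homog_ad_pow: "homog deg k W \<Longrightarrow> homog deg (k - int n) (ad_pow d n W)"
proof (induction n)
  case (Suc n)
  then show ?case
    using homog_bracket[OF dh Suc.IH[OF Suc.prems]] by (simp add: ad_pow_Suc algebra_simps)
qed simp

text \<open>ad_\<delta> is nilpotent: it lowers degrees, which range over a bounded set.\<close>
definition nil_bound :: nat where
  "nil_bound = 2 * spread deg + 3"

lemma ad_pow_nil:
  assumes "n \<ge> nil_bound"
  shows "ad_pow d n X = 0"
proof (rule zero_if_comps)
  fix j
  show "comp deg j (ad_pow d n X) = 0"
  proof (cases "\<bar>j\<bar> > int (spread deg)")
    case True
    have "homog deg j (ad_pow d n (comp deg (j + int n) X))"
      using homog_ad_pow[OF homog_comp[of deg "j + int n" X], of n] by simp
    then show ?thesis unfolding comp_ad_pow using True by (rule homog_big_zero)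
  next
    case False
    then have "int (spread deg) < \<bar>j + int n\<bar>" using assms by (simp add: nil_bound_def)
    then have "comp deg (j + int n) X = 0" by (rule homog_big_zero[OF homog_comp])
    then show ?thesis by (simp add: comp_ad_pow)
  qed
qed

end

section \<open>The universal prolongation of the line K\<delta>\<close>

locale prolongation = lowering deg d
  for deg :: "'n::finite \<Rightarrow> int" and d :: "'a::field_char_0^'n^'n" +
  fixes g :: "('a^'n^'n) set"
  assumes lie: "lie_subalgebra g" and dg: "d \<in> g"
begin

lemma g_sub: "msubspace g"
  using lie by (simp add: lie_subalgebra_def)
lemma g_bracket: "A \<in> g \<Longrightarrow> B \<in> g \<Longrightarrow> bracket A B \<in> g"
  using lie by (simp add: lie_subalgebra_def)

lemma line_sub: "msubspace (line d)"
  unfolding msubspace_def line_def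
  by (auto simp: scaleM_add_left[symmetric]) (metis scaleM_zero)
lemma line_mem [simp]: "scaleM c d \<in> line d"
  by (auto simp: line_def)
lemma line_d [simp]: "d \<in> line d"
  by (metis line_mem scaleM_one)
lemma line_zero [simp]: "0 \<in> line d"
  by (metis line_mem scaleM_zero)
lemma line_g: "X \<in> line d \<Longrightarrow> X \<in> g"
  by (auto simp: line_def intro: msub_scale[OF g_sub dg])
lemma line_homog: "X \<in> line d \<Longrightarrow> homog deg (-1) X"
  by (auto simp: line_def intro: homog_scale[OF dh])

lemma prol_props:
  "msubspace (prol deg g d m) \<and> (\<forall>X\<in>prol deg g d m. X \<in> g \<and> homog deg (int m - 1) X)"
proof (induction m)
  case 0
  then show ?case using line_sub line_g line_homog by simp
next
  case (Suc m)
  then have sub: "msubspace (prol deg g d m)" by blast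
  have "msubspace (prol deg g d (Suc m))"
    unfolding msubspace_def
    using sub msub_zero[OF g_sub] msub_add[OF g_sub] msub_scale[OF g_sub]
    by (auto simp: bracket_add_l bracket_scale_l msub_zero msub_add msub_scale homog_add homog_scale)
  then show ?case by auto
qed

lemma prol_sub: "msubspace (prol deg g d m)"
  using prol_props by blast
text \<open>Since m = K\<delta> is one-dimensional, testing against \<delta> alone suffices.\<close>
lemma prol_Suc_iff:
  "X \<in> prol deg g d (Suc m) \<longleftrightarrow> X \<in> g \<and> homog deg (int m) X \<and> bracket d X \<in> prol deg g d m"
proof -
  have scaled: "bracket X (scaleM c d) = scaleM (- c) (bracket d X)" for c
    by (simp add: bracket_scale_r bracket_antisym[of X] vec_eq_iff)
  have "(\<forall>d'\<in>line d. bracket X d' \<in> prol deg g d m) \<longleftrightarrow> bracket d X \<in> prol deg g d m"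
  proof
    assume "\<forall>d'\<in>line d. bracket X d' \<in> prol deg g d m"
    then have "bracket X (scaleM (- 1) d) \<in> prol deg g d m"
      using line_mem by blast
    then show "bracket d X \<in> prol deg g d m" by (simp add: scaled)
  qed (auto simp: line_def scaled intro: msub_scale[OF prol_sub])
  then show ?thesis by simp
qed

lemma prol_iff:
  "X \<in> prol deg g d m \<longleftrightarrow> X \<in> g \<and> homog deg (int m - 1) X \<and> ad_pow d m X \<in> line d"
proof (induction m arbitrary: X)
  case 0
  then show ?case using line_g line_homog by auto
next
  case (Suc m)
  have "X \<in> g \<Longrightarrow> bracket d X \<in> g" using g_bracket dg by blast
  moreover have "homog deg (int m) X \<Longrightarrow> homog deg (int m - 1) (bracket d X)"
    using homog_bracket[OF dh] by fastforce
  ultimately show ?case unfolding prol_Suc_iff Suc ad_pow_Suc' by auto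
qed

text \<open>The kernel part N_m of the prolongation; N = \<Oplus> N_{k+1} will be n_max(m).\<close>
definition nker :: "nat \<Rightarrow> ('a^'n^'n) set" where
  "nker m = {X \<in> prol deg g d m. ad_pow d m X = 0}"

lemma nker_0: "nker 0 = {0}"
  by (auto simp: nker_def intro: msub_zero[OF line_sub])

lemma nker_Suc_iff:
  "X \<in> nker (Suc m) \<longleftrightarrow> X \<in> g \<and> homog deg (int m) X \<and> bracket d X \<in> nker m"
  unfolding nker_def mem_Collect_eq prol_Suc_iff ad_pow_Suc' by blast

lemma nker_sub: "msubspace (nker m)"
  using prol_sub[of m] unfolding msubspace_def nker_def by (auto simp: ad_pow_add ad_pow_scale)

lemma nker_prol: "X \<in> nker m \<Longrightarrow> X \<in> prol deg g d m"
  by (simp add: nker_def)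

text \<open>The key ideal property [u_{a-1}, N_b] \<subseteq> N_{a+b-1}, by induction on a + b using
  [\<delta>, [A, B]] = [[\<delta>, A], B] + [A, [\<delta>, B]].\<close>
lemma bracket_nker:
  "A \<in> prol deg g d a \<Longrightarrow> B \<in> nker b \<Longrightarrow> bracket A B \<in> nker (a + b - 1)"
proof (induction "a + b" arbitrary: a b A B rule: less_induct)
  case less
  show ?case
  proof (cases b)
    case 0
    then show ?thesis using less.prems nker_0 msub_zero[OF nker_sub] by auto
  next
    case (Suc b')
    have Bd: "bracket d B \<in> nker b'"
      using less.prems(2) Suc nker_Suc_iff by blast
    show ?thesis
    proof (cases a)
      case 0
      then obtain c where "A = scaleM c d" using less.prems by (auto simp: line_def)
      then have "bracket A B = scaleM c (bracket d B)" by (simp add: bracket_scale_l)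
      then show ?thesis using msub_scale[OF nker_sub Bd] 0 Suc by simp
    next
      case (Suc a')
      have A: "A \<in> g" "homog deg (int a') A" "bracket d A \<in> prol deg g d a'"
        using less.prems(1) Suc prol_Suc_iff by auto
      have B: "B \<in> g" "homog deg (int b') B"
        using less.prems(2) \<open>b = Suc b'\<close> nker_Suc_iff by auto
      have "bracket (bracket d A) B \<in> nker (a' + b')"
        using less.hyps[of a' b] A(3) less.prems(2) Suc \<open>b = Suc b'\<close> by simp
      moreover have "bracket A (bracket d B) \<in> nker (a' + b')"
        using less.hyps[of a b'] less.prems(1) Bd \<open>b = Suc b'\<close> Suc by simp
      ultimately have "bracket d (bracket A B) \<in> nker (a' + b')"
        unfolding jacobi[of d A B] by (rule msub_add[OF nker_sub])
      moreover have "bracket A B \<in> g" using A B g_bracket by blast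
      moreover have "homog deg (int (a' + b')) (bracket A B)"
        using homog_bracket[OF A(2) B(2)] by simp
      ultimately show ?thesis using nker_Suc_iff Suc \<open>b = Suc b'\<close> by simp
    qed
  qed
qed

end

section \<open>The maximal ideal n_max(m)\<close>

context prolongation
begin

lemma umax_low: "X \<in> umax deg g d \<Longrightarrow> k < -1 \<Longrightarrow> comp deg k X = 0"
  by (simp add: umax_def)
lemma umax_comp: "X \<in> umax deg g d \<Longrightarrow> k \<ge> -1 \<Longrightarrow> comp deg k X \<in> prol deg g d (nat (k + 1))"
  by (simp add: umax_def uk_def)

lemma umax_sub: "msubspace (umax deg g d)"
  unfolding msubspace_def umax_def uk_def
  by (auto simp: comp_add comp_scale msub_zero[OF prol_sub]
      intro: msub_add[OF prol_sub] msub_scale[OF prol_sub])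

lemma homog_umax:
  assumes "homog deg j A" "j \<ge> -1" "A \<in> prol deg g d (nat (j + 1))"
  shows "A \<in> umax deg g d"
  unfolding umax_def uk_def
  using assms by (auto simp: comp_of_homog[OF assms(1)] msub_zero[OF prol_sub])

lemma d_umax: "d \<in> umax deg g d"
  using homog_umax[OF dh] by simp

definition nideal :: "('a^'n^'n) set" where
  "nideal = {X. (\<forall>k<0. comp deg k X = 0) \<and> (\<forall>k\<ge>0. comp deg k X \<in> nker (nat (k + 1)))}"

lemma nideal_umax: "nideal \<subseteq> umax deg g d"
  unfolding nideal_def umax_def uk_def
proof safe
  fix X k
  assume "\<forall>k<0. comp deg k X = 0" "\<forall>k\<ge>0. comp deg k X \<in> nker (nat (k + 1))" "(-1::int) \<le> k"
  then show "comp deg k X \<in> prol deg g d (nat (k + 1))"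
    by (cases "k = -1") (auto intro: nker_prol msub_zero[OF prol_sub])
qed auto

lemma nideal_sub: "msubspace nideal"
  unfolding msubspace_def nideal_def
  by (auto simp: comp_add comp_scale
      intro: msub_zero[OF nker_sub] msub_add[OF nker_sub] msub_scale[OF nker_sub])

definition npart :: "int \<Rightarrow> ('a^'n^'n) set" where
  "npart k = (if k \<ge> 0 then nker (nat (k + 1)) else {0})"

lemma npart_sub: "msubspace (npart k)"
  by (simp add: npart_def nker_sub msub_single0)

lemma nideal_iff: "X \<in> nideal \<longleftrightarrow> (\<forall>k. comp deg k X \<in> npart k)"
proof
  assume "X \<in> nideal"
  then show "\<forall>k. comp deg k X \<in> npart k" by (simp add: nideal_def npart_def)
next
  assume parts: "\<forall>k. comp deg k X \<in> npart k"
  show "X \<in> nideal"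
    unfolding nideal_def
  proof (intro CollectI conjI allI impI)
    fix k :: int assume "k < 0"
    then show "comp deg k X = 0" using spec[OF parts, of k] by (simp add: npart_def)
  next
    fix k :: int assume "k \<ge> 0"
    then show "comp deg k X \<in> nker (nat (k + 1))" using spec[OF parts, of k] by (simp add: npart_def)
  qed
qed

lemma bracket_comp_npart:
  assumes A: "A \<in> umax deg g d" and B: "B \<in> nideal"
  shows "bracket (comp deg j A) (comp deg l B) \<in> npart (j + l)"
proof (cases "j < -1 \<or> l < 0")
  case True
  then have "comp deg j A = 0 \<or> comp deg l B = 0"
    using umax_low[OF A] B by (auto simp: nideal_def)
  then show ?thesis using msub_zero[OF npart_sub] by auto
next
  case False
  have "comp deg j A \<in> prol deg g d (nat (j + 1))" using umax_comp[OF A] False by simp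
  moreover have "comp deg l B \<in> nker (nat (l + 1))" using B False by (auto simp: nideal_def)
  ultimately have "bracket (comp deg j A) (comp deg l B) \<in> nker (nat (j + 1) + nat (l + 1) - 1)"
    by (rule bracket_nker)
  moreover have "nat (j + 1) + nat (l + 1) - 1 = nat (j + l + 1)" using False by auto
  moreover have "nker (nat (j + l + 1)) = npart (j + l)"
    using False nker_0 by (cases "j + l \<ge> 0") (simp_all add: npart_def)
  ultimately show ?thesis by simp
qed

lemma nideal_bracket:
  assumes A: "A \<in> umax deg g d" and B: "B \<in> nideal"
  shows "bracket A B \<in> nideal"
  unfolding nideal_iff
proof
  fix k
  define S where "S = (\<lambda>(i, l). deg i - deg l) ` (UNIV :: ('n \<times> 'n) set)"
  have S: "finite S" "\<And>i l. deg i - deg l \<in> S" by (auto simp: S_def)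
  have split: "bracket A B = (\<Sum>j\<in>S. \<Sum>l\<in>S. bracket (comp deg j A) (comp deg l B))"
    by (simp only: bracket_sum_r[symmetric] bracket_sum_l[symmetric] sum_comp[OF S])
  have comp_piece: "comp deg k (bracket (comp deg j A) (comp deg l B))
      = (if k = j + l then bracket (comp deg j A) (comp deg l B) else 0)" for j l
    by (rule comp_of_homog[OF homog_bracket[OF homog_comp homog_comp]])
  have "comp deg k (bracket A B)
      = (\<Sum>j\<in>S. \<Sum>l\<in>S. comp deg k (bracket (comp deg j A) (comp deg l B)))"
    by (simp only: split comp_sum)
  also have "\<dots> \<in> npart k"
  proof (intro msub_sum[OF npart_sub])
    fix j l
    show "comp deg k (bracket (comp deg j A) (comp deg l B)) \<in> npart k"
      unfolding comp_piece using bracket_comp_npart[OF A B, of j l] msub_zero[OF npart_sub]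
      by (cases "k = j + l") simp_all
  qed
  finally show "comp deg k (bracket A B) \<in> npart k" .
qed

lemma nideal_lie_ideal: "lie_ideal (umax deg g d) nideal"
  unfolding lie_ideal_def using nideal_sub nideal_umax nideal_bracket by blast

text \<open>Conversely an ideal I of u(m) in non-negative degrees contains ad^{k+1} X for X \<in> I;
  its degree -1 component ad^{k+1} X_k therefore vanishes, i.e. X_k \<in> N_{k+1}.\<close>
lemma nmax_eq: "nmax deg g d = nideal"
proof
  have "nideal \<subseteq> {X \<in> umax deg g d. \<forall>k<0. comp deg k X = 0}"
    using nideal_umax by (auto simp: nideal_def)
  then show "nideal \<subseteq> nmax deg g d"
    unfolding nmax_def using nideal_lie_ideal by blast
next
  show "nmax deg g d \<subseteq> nideal"
  proof
    fix X assume "X \<in> nmax deg g d"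
    then obtain I where I: "lie_ideal (umax deg g d) I"
      "I \<subseteq> {X \<in> umax deg g d. \<forall>k<0. comp deg k X = 0}" "X \<in> I"
      unfolding nmax_def by blast
    have ideal: "bracket A B \<in> I" if "A \<in> umax deg g d" "B \<in> I" for A B
      using I(1) that unfolding lie_ideal_def by blast
    have ad_I: "ad_pow d m X \<in> I" for m
      by (induction m) (simp_all add: I(3) ad_pow_Suc ideal d_umax)
    have XU: "X \<in> umax deg g d" and neg: "\<And>k. k < 0 \<Longrightarrow> comp deg k X = 0"
      using I by auto
    have "comp deg k X \<in> nker (nat (k + 1))" if k: "k \<ge> 0" for k
    proof -
      have "ad_pow d (nat (k + 1)) X \<in> {X \<in> umax deg g d. \<forall>k<0. comp deg k X = 0}"
        using I(2) ad_I by blast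
      then have "comp deg (-1) (ad_pow d (nat (k + 1)) X) = 0" by simp
      then have "ad_pow d (nat (k + 1)) (comp deg k X) = 0" using k by (simp add: comp_ad_pow)
      moreover have "comp deg k X \<in> prol deg g d (nat (k + 1))" using umax_comp[OF XU] k by simp
      ultimately show ?thesis by (simp add: nker_def)
    qed
    then show "X \<in> nideal" using neg by (simp add: nideal_def)
  qed
qed

end

section \<open>The sl_2-triple and the prolongation in degrees \<ge> 2\<close>

locale sl2_triple = prolongation deg d g
  for deg :: "'n::finite \<Rightarrow> int" and d :: "'a::field_char_0^'n^'n" and g +
  fixes H Y :: "'a^'n^'n"
  assumes dnz: "d \<noteq> 0"
    and Hg: "H \<in> g" and Hh: "homog deg 0 H" and Yg: "Y \<in> g" and Yh: "homog deg 1 Y"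
    and rHd: "bracket H d = scaleM 2 d" and rdY: "bracket d Y = H"
begin

lemma dH: "bracket d H = scaleM (-2) d"
  using rHd bracket_antisym[of d H] by (simp add: vec_eq_iff)

lemma Yd: "bracket Y d = - H"
  using rdY bracket_antisym[of Y d] by simp

text \<open>Commuting H and Y past ad^n; these are the sl_2 commutation formulas in U(sl_2).\<close>
lemma bracket_H_ad_pow:
  "bracket H (ad_pow d n Z) = ad_pow d n (bracket H Z) + scaleM (2 * of_nat n) (ad_pow d n Z)"
proof (induction n)
  case (Suc n)
  have "bracket H (ad_pow d (Suc n) Z)
      = bracket (bracket H d) (ad_pow d n Z) + bracket d (bracket H (ad_pow d n Z))"
    unfolding ad_pow_Suc by (rule jacobi)
  also have "\<dots> = scaleM 2 (ad_pow d (Suc n) Z) + ad_pow d (Suc n) (bracket H Z)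
      + scaleM (2 * of_nat n) (ad_pow d (Suc n) Z)"
    by (simp add: Suc rHd bracket_scale_l bracket_scale_r bracket_add_r ad_pow_Suc)
  also have "\<dots> = ad_pow d (Suc n) (bracket H Z) + scaleM (2 * of_nat (Suc n)) (ad_pow d (Suc n) Z)"
    by (simp add: vec_eq_iff algebra_simps)
  finally show ?case .
qed simp

lemma bracket_Y_ad_pow:
  "bracket Y (ad_pow d (Suc n) Z) = ad_pow d (Suc n) (bracket Y Z)
     - scaleM (of_nat (n + 1)) (ad_pow d n (bracket H Z)) - scaleM (of_nat ((n + 1) * n)) (ad_pow d n Z)"
proof (induction n)
  case 0
  show ?case by (simp add: ad_pow_Suc jacobi[of Y d Z] Yd bracket_neg_l)
next
  case (Suc n)
  let ?W = "ad_pow d (Suc n) Z"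
  have "bracket Y (ad_pow d (Suc (Suc n)) Z) = - bracket H ?W + bracket d (bracket Y ?W)"
    by (simp add: ad_pow_Suc[of d "Suc n"] jacobi[of Y d] Yd bracket_neg_l)
  also have "\<dots> = - (ad_pow d (Suc n) (bracket H Z) + scaleM (2 * of_nat (Suc n)) ?W)
       + (ad_pow d (Suc (Suc n)) (bracket Y Z) - scaleM (of_nat (n + 1)) (ad_pow d (Suc n) (bracket H Z))
         - scaleM (of_nat ((n + 1) * n)) ?W)"
    by (simp only: bracket_H_ad_pow Suc bracket_diff_r bracket_scale_r ad_pow_Suc[symmetric])
  also have "\<dots> = ad_pow d (Suc (Suc n)) (bracket Y Z)
      - scaleM (of_nat (Suc n + 1)) (ad_pow d (Suc n) (bracket H Z))
      - scaleM (of_nat ((Suc n + 1) * Suc n)) ?W"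
    by (simp add: vec_eq_iff algebra_simps)
  finally show ?case .
qed

text \<open>Lifting: if Z has degree N-1 with N \<ge> 3 and ad^N Z = c\<delta>, then a multiple of [Y, Z]
  has degree N and the same property (the factor (N+1)(2-N) is non-zero).\<close>
lemma sl2_lift:
  assumes N: "N \<ge> 3" and Zh: "homog deg (int N - 1) Z" and Ze: "ad_pow d N Z = scaleM c d"
  shows "\<exists>Z'. homog deg (int (Suc N) - 1) Z' \<and> ad_pow d (Suc N) Z' = scaleM c d"
proof -
  have top: "ad_pow d (Suc N) Z = 0"
    by (simp add: ad_pow_Suc Ze bracket_scale_r)
  have HZ: "ad_pow d N (bracket H Z) = scaleM (2 * c - 2 * of_nat N * c) d"
  proof -
    have "scaleM (c * 2) d = ad_pow d N (bracket H Z) + scaleM (2 * of_nat N * c) d"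
      using bracket_H_ad_pow[of N Z] by (simp add: Ze bracket_scale_r rHd)
    then show ?thesis by (simp add: vec_eq_iff algebra_simps)
  qed
  define k :: 'a where "k = (of_nat N + 1) * (2 - of_nat N)"
  have "ad_pow d (Suc N) (bracket Y Z)
      = scaleM (of_nat (N + 1)) (ad_pow d N (bracket H Z)) + scaleM (of_nat ((N + 1) * N)) (ad_pow d N Z)"
    using bracket_Y_ad_pow[of N Z] top by (simp add: diff_diff_eq eq_diff_eq)
  then have YZ: "ad_pow d (Suc N) (bracket Y Z) = scaleM (k * c) d"
    unfolding HZ Ze k_def by (simp add: vec_eq_iff algebra_simps)
  have "(2::'a) - of_nat N \<noteq> 0"
  proof
    assume "(2::'a) - of_nat N = 0"
    then have "(of_nat N :: 'a) = of_nat 2" by simp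
    then have "N = 2" using of_nat_eq_iff by blast
    then show False using N by simp
  qed
  moreover have "(of_nat N + 1 :: 'a) \<noteq> 0"
    using of_nat_neq_0[of N, where 'a = 'a] by (simp add: add.commute)
  ultimately have "k \<noteq> 0" by (simp add: k_def)
  then have "ad_pow d (Suc N) (scaleM (1 / k) (bracket Y Z)) = scaleM c d"
    by (simp add: ad_pow_scale YZ)
  moreover have "homog deg (int (Suc N) - 1) (scaleM (1 / k) (bracket Y Z))"
    using homog_bracket[OF Yh Zh] by (auto intro: homog_scale)
  ultimately show ?thesis by blast
qed

text \<open>Iterating the lift beyond the range of degrees shows that c must vanish.\<close>
lemma sl2_top_vanishes:
  assumes n: "n \<ge> 3" and Zh: "homog deg (int n - 1) Z" and Ze: "ad_pow d n Z = scaleM c d"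
  shows "c = 0"
proof -
  have lifted: "\<exists>Z'. homog deg (int (n + p) - 1) Z' \<and> ad_pow d (n + p) Z' = scaleM c d" for p
  proof (induction p)
    case 0
    then show ?case using Zh Ze by auto
  next
    case (Suc p)
    then obtain Z' where "homog deg (int (n + p) - 1) Z'" "ad_pow d (n + p) Z' = scaleM c d"
      by blast
    then show ?case using sl2_lift[of "n + p" Z' c] n by simp
  qed
  obtain Z' where Z': "homog deg (int (n + (spread deg + 2)) - 1) Z'"
    "ad_pow d (n + (spread deg + 2)) Z' = scaleM c d"
    using lifted by blast
  have "Z' = 0" by (rule homog_big_zero[OF Z'(1)]) simp
  then have "scaleM c d = 0" using Z'(2) by simp
  then show ?thesis using dnz by (simp add: scaleM_eq_0_iff)
qed

lemma prol_high_nker: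
  assumes "m \<ge> 3" "X \<in> prol deg g d m"
  shows "X \<in> nker m"
proof -
  obtain c where c: "ad_pow d m X = scaleM c d" "homog deg (int m - 1) X"
    using assms(2) unfolding prol_iff line_def by blast
  then have "c = 0" using sl2_top_vanishes[OF assms(1)] by blast
  then show ?thesis using assms(2) c by (simp add: nker_def)
qed

end

section \<open>The decomposition u(m) = s \<oplus> n_max(m)\<close>

context prolongation
begin

lemma prol_mod_nker:
  assumes X: "X \<in> prol deg g d m" and W: "W \<in> prol deg g d m"
    and Wd: "ad_pow d m W = scaleM w d" and w: "w \<noteq> 0" and Xd: "ad_pow d m X = scaleM c d"
  shows "X - scaleM (c / w) W \<in> nker m"
proof -
  have "X - scaleM (c / w) W \<in> prol deg g d m"
    by (rule msub_diff[OF prol_sub X msub_scale[OF prol_sub W]])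
  moreover have "ad_pow d m (X - scaleM (c / w) W) = 0"
    using w Xd by (simp add: ad_pow_diff ad_pow_scale Wd vec_eq_iff)
  ultimately show ?thesis by (simp add: nker_def)
qed

lemma scaled_nker_zero:
  assumes "ad_pow d m W = scaleM w d" "w \<noteq> 0" "d \<noteq> 0" "scaleM c W \<in> nker m"
  shows "c = 0"
  using assms by (simp add: nker_def ad_pow_scale scaleM_eq_0_iff)

end

context sl2_triple
begin

definition s_elt :: "'a \<Rightarrow> 'a \<Rightarrow> 'a \<Rightarrow> 'a^'n^'n" where
  "s_elt a b c = scaleM a d + scaleM b H + scaleM c Y"

lemma s_elt_diff: "s_elt a b c - s_elt a' b' c' = s_elt (a - a') (b - b') (c - c')"
  by (simp add: s_elt_def vec_eq_iff algebra_simps)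

lemma comp_s_elt:
  "comp deg k (s_elt a b c) = (if k = -1 then scaleM a d else if k = 0 then scaleM b H
     else if k = 1 then scaleM c Y else 0)"
  by (simp add: s_elt_def comp_add comp_scale comp_of_homog[OF dh] comp_of_homog[OF Hh]
      comp_of_homog[OF Yh])

lemma ad_H: "ad_pow d 1 H = scaleM (-2) d"
  by (simp add: ad_pow_Suc dH)
lemma ad_Y: "ad_pow d 2 Y = scaleM (-2) d"
  by (simp add: ad_pow_Suc numeral_2_eq_2 rdY dH)

lemma H_ne: "H \<noteq> 0"
  using ad_H dnz by (auto simp: scaleM_eq_0_iff)
lemma Y_ne: "Y \<noteq> 0"
  using ad_Y dnz by (auto simp: scaleM_eq_0_iff)

lemma H_prol: "H \<in> prol deg g d 1"
  unfolding prol_iff using Hg Hh ad_H by simp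
lemma Y_prol: "Y \<in> prol deg g d 2"
  unfolding prol_iff using Yg Yh ad_Y by simp

lemma s_elt_indep: "s_elt a b c = 0 \<Longrightarrow> a = 0 \<and> b = 0 \<and> c = 0"
proof -
  assume z: "s_elt a b c = 0"
  have "scaleM a d = 0" "scaleM b H = 0" "scaleM c Y = 0"
    using arg_cong[OF z, of "comp deg (-1)"] arg_cong[OF z, of "comp deg 0"]
      arg_cong[OF z, of "comp deg 1"]
    by (simp_all add: comp_s_elt)
  then show ?thesis using dnz H_ne Y_ne by (simp add: scaleM_eq_0_iff)
qed

lemma s_elt_umax: "s_elt a b c \<in> umax deg g d"
proof -
  have "H \<in> umax deg g d" "Y \<in> umax deg g d"
    using homog_umax[OF Hh] homog_umax[OF Yh] H_prol Y_prol by simp_all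
  then show ?thesis
    unfolding s_elt_def by (intro msub_add[OF umax_sub] msub_scale[OF umax_sub] d_umax)
qed

text \<open>s meets N trivially: the components of degrees -1, 0, 1 are tested by ad^0, ad^1, ad^2.\<close>
lemma s_elt_nideal: "s_elt a b c \<in> nideal \<Longrightarrow> a = 0 \<and> b = 0 \<and> c = 0"
proof -
  assume N: "s_elt a b c \<in> nideal"
  have "comp deg (-1) (s_elt a b c) = 0" using N by (simp add: nideal_def)
  then have a: "a = 0" using dnz by (simp add: comp_s_elt scaleM_eq_0_iff)
  have NN: "\<forall>k\<ge>0. comp deg k (s_elt a b c) \<in> nker (nat (k + 1))"
    using N by (simp add: nideal_def)
  have "scaleM b H \<in> nker 1" using NN[rule_format, of 0] by (simp add: comp_s_elt)
  then have b: "b = 0" using scaled_nker_zero[OF ad_H _ dnz] by simp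
  have "scaleM c Y \<in> nker 2" using NN[rule_format, of 1] by (simp add: comp_s_elt)
  then have c: "c = 0" using scaled_nker_zero[OF ad_Y _ dnz] by simp
  show ?thesis using a b c by simp
qed

text \<open>Every X \<in> u(m) is congruent modulo N to an element of s: the components of X in
  degrees -1, 0, 1 are adjusted by \<delta>, H, Y, and the higher ones already lie in N.\<close>
lemma decomposition_exists:
  assumes X: "X \<in> umax deg g d"
  shows "\<exists>a b c. X - s_elt a b c \<in> nideal"
proof -
  obtain a where a: "comp deg (-1) X = scaleM a d"
    using umax_comp[OF X, of "-1"] by (auto simp: line_def)
  have X0: "comp deg 0 X \<in> prol deg g d 1"
    using umax_comp[OF X, of 0] by simp
  have X1: "comp deg 1 X \<in> prol deg g d 2"
    using umax_comp[OF X, of 1] by (simp add: nat_add_distrib)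
  obtain e0 where e0: "ad_pow d 1 (comp deg 0 X) = scaleM e0 d"
    using X0 unfolding prol_iff line_def by blast
  obtain e1 where e1: "ad_pow d 2 (comp deg 1 X) = scaleM e1 d"
    using X1 unfolding prol_iff line_def by blast
  define b where "b = e0 / -2"
  define c where "c = e1 / -2"
  let ?Z = "X - s_elt a b c"
  have "comp deg k ?Z = 0" if "k < 0" for k
    using that umax_low[OF X, of k] by (cases "k = -1") (simp_all add: comp_diff comp_s_elt a)
  moreover have "comp deg k ?Z \<in> nker (nat (k + 1))" if k: "k \<ge> 0" for k
  proof -
    consider "k = 0" | "k = 1" | "k \<ge> 2" using k by linarith
    then show ?thesis
    proof cases
      case 1
      then show ?thesis
        using prol_mod_nker[OF X0 H_prol ad_H _ e0] by (simp add: comp_diff comp_s_elt b_def)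
    next
      case 2
      then show ?thesis
        using prol_mod_nker[OF X1 Y_prol ad_Y _ e1] by (simp add: comp_diff comp_s_elt c_def)
    next
      case 3
      have "comp deg k X \<in> prol deg g d (nat (k + 1))" using umax_comp[OF X, of k] k by simp
      then have "comp deg k X \<in> nker (nat (k + 1))" using 3 by (intro prol_high_nker) auto
      then show ?thesis using 3 by (simp add: comp_diff comp_s_elt)
    qed
  qed
  ultimately show ?thesis unfolding nideal_def by blast
qed

lemma decomposition_unique:
  assumes "X \<in> umax deg g d"
  shows "\<exists>!(a, b, c). X - s_elt a b c \<in> nideal"
proof -
  obtain a b c where abc: "X - s_elt a b c \<in> nideal"
    using decomposition_exists[OF assms] by blast
  have same: "(a', b', c') = (a, b, c)" if "X - s_elt a' b' c' \<in> nideal" for a' b' c'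
  proof -
    have "(X - s_elt a' b' c') - (X - s_elt a b c) \<in> nideal"
      by (rule msub_diff[OF nideal_sub that abc])
    then have "s_elt (a - a') (b - b') (c - c') \<in> nideal"
      by (simp add: s_elt_diff[symmetric])
    then have "a - a' = 0 \<and> b - b' = 0 \<and> c - c' = 0"
      by (rule s_elt_nideal)
    then show ?thesis by simp
  qed
  show ?thesis
  proof (rule ex1I[of _ "(a, b, c)"])
    show "case (a, b, c) of (a, b, c) \<Rightarrow> X - s_elt a b c \<in> nideal"
      using abc by simp
  next
    fix y assume "case y of (a, b, c) \<Rightarrow> X - s_elt a b c \<in> nideal"
    then show "y = (a, b, c)" using same by (cases y) simp
  qed
qed

end

section \<open>The flag curve t \<mapsto> e^{t\<delta>} V^\<bullet> and the non-effectiveness ideal\<close>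

lemma mpow_0 [simp]: "mpow A 0 = mat 1"
  by (simp add: mpow_def)
lemma mpow_Suc: "mpow A (Suc k) = A ** mpow A k"
  by (simp add: mpow_def)
lemma mpow_add: "mpow A (p + q) = mpow A p ** mpow (A::'a::semiring_1^'n^'n) q"
  by (induction p) (simp_all add: mpow_Suc matrix_mul_assoc)
lemma mpow_Suc': "mpow A (Suc k) = mpow A k ** (A::'a::semiring_1^'n^'n)"
  using mpow_add[of A k 1] by (simp add: mpow_Suc)

lemma cauchy_mm:
  fixes a b :: "nat \<Rightarrow> 'a::comm_ring_1^'n^'n"
  assumes a0: "\<And>p. p \<ge> A \<Longrightarrow> a p = 0" and b0: "\<And>q. q \<ge> B \<Longrightarrow> b q = 0"
  shows "(\<Sum>p<A. a p) ** (\<Sum>q<B. b q) = (\<Sum>N<A+B. \<Sum>n\<le>N. a (N - n) ** b n)"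
proof -
  have "(\<Sum>p<A. a p) ** (\<Sum>q<B. b q) = (\<Sum>(q, p)\<in>{..<B} \<times> {..<A}. a p ** b q)"
    by (simp add: mm_sum_r mm_sum_l sum.cartesian_product)
  also have "\<dots> = (\<Sum>(q, p)\<in>{(q, p). q + p < A + B}. a p ** b q)"
  proof (rule sum.mono_neutral_left)
    show "finite {(q, p). q + p < A + B}"
      by (rule finite_subset[of _ "{..<A+B} \<times> {..<A+B}"]) auto
    show "\<forall>x\<in>{(q, p). q + p < A + B} - {..<B} \<times> {..<A}. (case x of (q, p) \<Rightarrow> a p ** b q) = 0"
    proof
      fix x assume x: "x \<in> {(q, p). q + p < A + B} - {..<B} \<times> {..<A}"
      obtain q p where qp: "x = (q, p)" by fastforce
      then have "q \<ge> B \<or> p \<ge> A" using x by auto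
      then show "(case x of (q, p) \<Rightarrow> a p ** b q) = 0" using qp a0 b0 by auto
    qed
  qed auto
  also have "\<dots> = (\<Sum>N<A+B. \<Sum>n\<le>N. a (N - n) ** b n)"
    by (rule sum.triangle_reindex)
  finally show ?thesis .
qed

lemma pascal_sum:
  fixes f :: "nat \<Rightarrow> 'a::comm_ring_1^'n^'n"
  shows "(\<Sum>n\<le>Suc N. scaleM (of_nat (Suc N choose n)) (f n))
       = (\<Sum>n\<le>N. scaleM (of_nat (N choose n)) (f n)) + (\<Sum>n\<le>N. scaleM (of_nat (N choose n)) (f (Suc n)))"
proof -
  have "(\<Sum>n\<le>Suc N. scaleM (of_nat (Suc N choose n)) (f n))
      = scaleM (of_nat (Suc N choose 0)) (f 0) + (\<Sum>n\<le>N. scaleM (of_nat (Suc N choose Suc n)) (f (Suc n)))"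
    by (rule sum.atMost_Suc_shift)
  also have "\<dots> = f 0 + (\<Sum>n\<le>N. scaleM (of_nat (N choose Suc n)) (f (Suc n)))
        + (\<Sum>n\<le>N. scaleM (of_nat (N choose n)) (f (Suc n)))"
    by (simp only: binomial_Suc_Suc of_nat_add scaleM_add_left sum.distrib binomial_n_0 of_nat_1
        scaleM_one add.assoc add.commute[of "\<Sum>n\<le>N. scaleM (of_nat (N choose Suc n)) (f (Suc n))"])
  also have "f 0 + (\<Sum>n\<le>N. scaleM (of_nat (N choose Suc n)) (f (Suc n)))
      = (\<Sum>n\<le>Suc N. scaleM (of_nat (N choose n)) (f n))"
    by (subst sum.atMost_Suc_shift) simp
  also have "\<dots> = (\<Sum>n\<le>N. scaleM (of_nat (N choose n)) (f n))"
    by (simp add: binomial_eq_0)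
  finally show ?thesis .
qed

lemma binomial_coeff_identity:
  fixes t :: "'a::field_char_0"
  assumes "n \<le> N"
  shows "(-t)^n * t^(N-n) / (fact n * fact (N-n)) = t^N * (of_nat (N choose n) * (-1)^n) / fact N"
proof -
  have tN: "t^N = t^(N-n) * t^n" using assms by (simp add: power_add[symmetric])
  have b: "(of_nat (N choose n) :: 'a) = fact N / (fact n * fact (N-n))"
    by (rule binomial_fact[OF assms])
  show ?thesis unfolding b power_minus[of t n] tN by (simp add: field_simps)
qed

lemma preserves_filt_iff:
  "(\<forall>i. \<forall>w\<in>filt deg i. F *v w \<in> filt deg i) \<longleftrightarrow> (\<forall>k<0. comp deg k (F::'a::comm_ring_1^'n^'n) = 0)"
proof
  assume h: "\<forall>k<0. comp deg k F = 0"
  show "\<forall>i. \<forall>w\<in>filt deg i. F *v w \<in> filt deg i"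
  proof (intro allI ballI)
    fix i and w :: "'a^'n" assume w: "w \<in> filt deg i"
    show "F *v w \<in> filt deg i" unfolding filt_def
    proof (intro CollectI allI impI)
      fix j assume j: "deg j < i"
      have "F$j$m * w$m = 0" for m
      proof (cases "deg m < i")
        case True then show ?thesis using w by (simp add: filt_def)
      next
        case False
        have "comp deg (deg j - deg m) F $ j $ m = F$j$m" by simp
        moreover have "comp deg (deg j - deg m) F = 0" using h False j by simp
        ultimately show ?thesis by simp
      qed
      then show "(F *v w) $ j = 0" by (simp add: matrix_vector_mult_def del: mult_eq_0_iff)
    qed
  qed
next
  assume h: "\<forall>i. \<forall>w\<in>filt deg i. F *v w \<in> filt deg i"
  show "\<forall>k<0. comp deg k F = 0"
  proof (intro allI impI, rule ccontr)
    fix k :: int assume k: "k < 0" and ne: "comp deg k F \<noteq> 0"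
    then obtain j m where "comp deg k F $ j $ m \<noteq> 0" by (auto simp: vec_eq_iff)
    then have dj: "deg j = deg m + k" and Fjm: "F$j$m \<noteq> 0" by (auto split: if_splits)
    define w :: "'a^'n" where "w = (\<chi> l. if l = m then 1 else 0)"
    have "w \<in> filt deg (deg m)" by (simp add: filt_def w_def)
    then have "F *v w \<in> filt deg (deg m)" using h by blast
    moreover have "(F *v w) $ j = F$j$m"
      by (simp add: matrix_vector_mult_def w_def if_distrib[of "\<lambda>x. _ * x"] cong: if_cong)
    ultimately show False using dj k Fjm by (simp add: filt_def)
  qed
qed

context lowering
begin

lemma homog_mpow: "homog deg (- int k) (mpow d k)"
proof (induction k)
  case 0
  then show ?case by (simp add: homog_def mat_def)
next
  case (Suc k)
  show ?case using homog_mm[OF dh Suc] by (simp add: mpow_Suc add.commute)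
qed

text \<open>A non-zero entry of \<delta>^k links basis vectors through k+1 distinct degrees; as there
  are at most n degrees, \<delta>^n = 0 and the truncated exponential is exact.\<close>
lemma mpow_path: "(mpow d k)$i$l \<noteq> 0 \<Longrightarrow> \<forall>s\<le>k. deg l - int s \<in> range deg"
proof (induction k arbitrary: i)
  case 0
  then have "i = l" by (simp add: mat_def split: if_splits)
  then show ?case by auto
next
  case (Suc k)
  then have "(\<Sum>m\<in>UNIV. d$i$m * (mpow d k)$m$l) \<noteq> 0" by (simp add: mpow_Suc mm_nth)
  then obtain m where m: "d$i$m * (mpow d k)$m$l \<noteq> 0"
    by (rule sum.not_neutral_contains_not_neutral)
  then have dm: "d$i$m \<noteq> 0" and pm: "(mpow d k)$m$l \<noteq> 0" by auto
  have "deg i = deg m - 1" using dh dm unfolding homog_def by force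
  moreover have "deg m = deg l - int k" using homog_mpow[of k] pm unfolding homog_def by force
  ultimately have "deg l - int (Suc k) = deg i" by simp
  then have "deg l - int (Suc k) \<in> range deg" by auto
  then show ?case using Suc.IH[OF pm] le_Suc_eq by auto
qed

lemma mpow_nil:
  assumes "k \<ge> CARD('n)"
  shows "mpow d k = 0"
proof (rule ccontr)
  assume "mpow d k \<noteq> 0"
  then obtain i l where il: "(mpow d k)$i$l \<noteq> 0" by (auto simp: vec_eq_iff)
  have sub: "(\<lambda>s. deg l - int s) ` {..k} \<subseteq> range deg" using mpow_path[OF il] by auto
  have "inj_on (\<lambda>s. deg l - int s) {..k}" by (auto simp: inj_on_def)
  then have "card ((\<lambda>s. deg l - int s) ` {..k}) = Suc k" by (simp add: card_image)
  moreover have "card ((\<lambda>s. deg l - int s) ` {..k}) \<le> card (range deg)"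
    by (rule card_mono[OF _ sub]) simp
  moreover have "card (range deg) \<le> CARD('n)" by (rule card_image_le) simp
  ultimately show False using assms by simp
qed

lemma expM_long:
  assumes "L \<ge> CARD('n)"
  shows "expM t d = (\<Sum>k<L. scaleM (t^k / fact k) (mpow d k))"
  unfolding expM_def
proof (rule sum.mono_neutral_left)
  show "\<forall>i\<in>{..<L} - {..<CARD('n)}. scaleM (t ^ i / fact i) (mpow d i) = 0"
    using mpow_nil by auto
qed (use assms in auto)

lemma expM_inverse: "expM t d ** expM (-t) d = mat 1"
proof -
  let ?M = "CARD('n)"
  have "expM t d ** expM (-t) d
      = (\<Sum>N<?M+?M. \<Sum>n\<le>N. scaleM (t^(N-n) / fact (N-n)) (mpow d (N-n)) ** scaleM ((-t)^n / fact n) (mpow d n))"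
    unfolding expM_def by (rule cauchy_mm) (simp_all add: mpow_nil)
  also have "\<dots> = (\<Sum>N<?M+?M. scaleM (t^N * (-1 + 1)^N / fact N) (mpow d N))"
  proof (rule sum.cong[OF refl])
    fix N
    have "(\<Sum>n\<le>N. scaleM (t^(N-n) / fact (N-n)) (mpow d (N-n)) ** scaleM ((-t)^n / fact n) (mpow d n))
        = (\<Sum>n\<le>N. scaleM (t^N * (of_nat (N choose n) * (-1)^n) / fact N) (mpow d N))"
    proof (rule sum.cong[OF refl])
      fix n assume "n \<in> {..N}"
      then have nN: "n \<le> N" by simp
      then have "mpow d (N - n) ** mpow d n = mpow d N" using mpow_add[of d "N-n" n] by simp
      then show "scaleM (t^(N-n) / fact (N-n)) (mpow d (N-n)) ** scaleM ((-t)^n / fact n) (mpow d n)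
          = scaleM (t^N * (of_nat (N choose n) * (-1)^n) / fact N) (mpow d N)"
        by (simp add: mm_scale_l mm_scale_r binomial_coeff_identity[OF nN, symmetric] mult.commute)
    qed
    also have "\<dots> = scaleM (t^N * (\<Sum>n\<le>N. of_nat (N choose n) * (-1)^n * 1^(N-n)) / fact N) (mpow d N)"
      by (simp add: scaleM_sum_left[symmetric] sum_divide_distrib sum_distrib_left mult_ac)
    also have "\<dots> = scaleM (t^N * (-1 + 1)^N / fact N) (mpow d N)"
      by (simp only: binomial_ring[of "-1" 1 N])
    finally show "(\<Sum>n\<le>N. scaleM (t^(N-n) / fact (N-n)) (mpow d (N-n)) ** scaleM ((-t)^n / fact n) (mpow d n))
        = scaleM (t^N * (-1 + 1)^N / fact N) (mpow d N)" .
  qed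
  also have "\<dots> = (\<Sum>N<?M+?M. if N = 0 then mat 1 else 0)"
    by (rule sum.cong) (auto simp: power_0_left)
  also have "\<dots> = mat 1" by simp
  finally show ?thesis .
qed

lemma mpow_commute_binomial:
  "X ** mpow d N = (\<Sum>n\<le>N. scaleM (of_nat (N choose n)) (scaleM ((-1)^n) (mpow d (N - n) ** ad_pow d n X)))"
proof (induction N)
  case (Suc N)
  define f where "f n = scaleM ((-1)^n) (mpow d (Suc N - n) ** ad_pow d n X)" for n
  have step: "scaleM ((-1)^n) (mpow d (N - n) ** ad_pow d n X) ** d = f n + f (Suc n)"
    if "n \<le> N" for n
  proof -
    have w: "ad_pow d n X ** d = d ** ad_pow d n X - ad_pow d (Suc n) X"
      by (simp add: ad_pow_Suc bracket_def)
    have m: "mpow d (N - n) ** d = mpow d (Suc N - n)"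
      using that by (simp add: mpow_Suc' Suc_diff_le)
    have "scaleM ((-1)^n) (mpow d (N - n) ** ad_pow d n X) ** d
        = scaleM ((-1)^n) (mpow d (N - n) ** (ad_pow d n X ** d))"
      by (simp add: mm_scale_r matrix_mul_assoc)
    also have "\<dots> = scaleM ((-1)^n) (mpow d (Suc N - n) ** ad_pow d n X)
          - scaleM ((-1)^n) (mpow d (N - n) ** ad_pow d (Suc n) X)"
      unfolding w by (simp add: mm_diff_l matrix_mul_assoc m scaleM_diff)
    finally show ?thesis by (simp add: f_def vec_eq_iff)
  qed
  have "X ** mpow d (Suc N) = (X ** mpow d N) ** d"
    by (simp add: mpow_Suc' matrix_mul_assoc)
  also have "\<dots> = (\<Sum>n\<le>N. scaleM (of_nat (N choose n))
      (scaleM ((-1)^n) (mpow d (N - n) ** ad_pow d n X) ** d))"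
    by (simp add: Suc mm_sum_r mm_scale_r)
  also have "\<dots> = (\<Sum>n\<le>N. scaleM (of_nat (N choose n)) (f n) + scaleM (of_nat (N choose n)) (f (Suc n)))"
    by (rule sum.cong) (simp_all add: step scaleM_add)
  also have "\<dots> = (\<Sum>n\<le>Suc N. scaleM (of_nat (Suc N choose n)) (f n))"
    by (simp only: pascal_sum sum.distrib)
  finally show ?case by (simp add: f_def)
qed simp

text \<open>F_t(X) = e^{-t ad \<delta>} X, a finite sum since ad \<delta> is nilpotent.\<close>
definition exp_ad :: "'a \<Rightarrow> 'a^'n^'n \<Rightarrow> 'a^'n^'n" where
  "exp_ad t X = (\<Sum>n<nil_bound. scaleM ((-t)^n / fact n) (ad_pow d n X))"

lemma exp_ad_diff: "exp_ad t (A - B) = exp_ad t A - exp_ad t B"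
  by (simp add: exp_ad_def ad_pow_diff scaleM_diff sum_subtractf)

lemma expM_conj: "X ** expM t d = expM t d ** exp_ad t X"
proof -
  let ?M = "CARD('n)"
  have "expM t d ** exp_ad t X
      = (\<Sum>N<?M+nil_bound. \<Sum>n\<le>N. scaleM (t^(N-n) / fact (N-n)) (mpow d (N-n))
          ** scaleM ((-t)^n / fact n) (ad_pow d n X))"
    unfolding expM_def exp_ad_def by (rule cauchy_mm) (simp_all add: mpow_nil ad_pow_nil)
  also have "\<dots> = (\<Sum>N<?M+nil_bound. scaleM (t^N / fact N) (X ** mpow d N))"
  proof (rule sum.cong[OF refl])
    fix N
    show "(\<Sum>n\<le>N. scaleM (t^(N-n) / fact (N-n)) (mpow d (N-n)) ** scaleM ((-t)^n / fact n) (ad_pow d n X))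
        = scaleM (t^N / fact N) (X ** mpow d N)"
      unfolding mpow_commute_binomial scaleM_sum
      by (rule sum.cong[OF refl]) (simp add: mm_scale_l mm_scale_r binomial_coeff_identity)
  qed
  also have "\<dots> = X ** expM t d"
    using expM_long[of "?M + nil_bound" t] by (simp add: mm_sum_l mm_scale_l)
  finally show ?thesis by simp
qed

lemma nne_iff:
  "X \<in> nne deg g d \<longleftrightarrow> X \<in> umax deg g d \<and> (\<forall>t. \<forall>k<0. comp deg k (exp_ad t X) = 0)"
proof -
  have pres: "(\<forall>i. \<forall>v \<in> (\<lambda>w. expM t d *v w) ` filt deg i. X *v v \<in> (\<lambda>w. expM t d *v w) ` filt deg i)
     \<longleftrightarrow> (\<forall>i. \<forall>w\<in>filt deg i. exp_ad t X *v w \<in> filt deg i)" for t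
  proof
    assume h: "\<forall>i. \<forall>w\<in>filt deg i. exp_ad t X *v w \<in> filt deg i"
    show "\<forall>i. \<forall>v \<in> (\<lambda>w. expM t d *v w) ` filt deg i. X *v v \<in> (\<lambda>w. expM t d *v w) ` filt deg i"
    proof (intro allI ballI)
      fix i v assume "v \<in> (\<lambda>w. expM t d *v w) ` filt deg i"
      then obtain w where w: "w \<in> filt deg i" "v = expM t d *v w" by blast
      have "X *v v = expM t d *v (exp_ad t X *v w)"
        by (simp add: w(2) matrix_vector_mul_assoc expM_conj)
      then show "X *v v \<in> (\<lambda>w. expM t d *v w) ` filt deg i" using h w(1) by blast
    qed
  next
    assume h: "\<forall>i. \<forall>v \<in> (\<lambda>w. expM t d *v w) ` filt deg i. X *v v \<in> (\<lambda>w. expM t d *v w) ` filt deg i"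
    show "\<forall>i. \<forall>w\<in>filt deg i. exp_ad t X *v w \<in> filt deg i"
    proof (intro allI ballI)
      fix i and w :: "'a^'n" assume w: "w \<in> filt deg i"
      then have "X *v (expM t d *v w) \<in> (\<lambda>w. expM t d *v w) ` filt deg i" using h by blast
      then obtain w' where w': "w' \<in> filt deg i" "X *v (expM t d *v w) = expM t d *v w'" by blast
      have "expM t d *v (exp_ad t X *v w) = expM t d *v w'"
        using w'(2) by (simp add: matrix_vector_mul_assoc expM_conj)
      then have "expM (-t) d *v (expM t d *v (exp_ad t X *v w)) = expM (-t) d *v (expM t d *v w')"
        by simp
      then have "exp_ad t X *v w = w'"
        using expM_inverse[of "-t"] by (simp add: matrix_vector_mul_assoc matrix_mul_assoc)
      then show "exp_ad t X *v w \<in> filt deg i" using w' by simp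
    qed
  qed
  moreover have "(\<forall>i. \<forall>w\<in>filt deg i. exp_ad t X *v w \<in> filt deg i)
      \<longleftrightarrow> (\<forall>k<0. comp deg k (exp_ad t X) = 0)" for t
    by (rule preserves_filt_iff)
  ultimately show ?thesis unfolding nne_def by auto
qed

end

context prolongation
begin

text \<open>Elements of N have no negative components after conjugation: the degree k < 0
  component of F_t(X) collects ad^n X_{k+n}, which vanishes as n \<ge> k+n+1.\<close>
lemma nideal_exp_ad:
  assumes X: "X \<in> nideal" and k: "k < 0"
  shows "comp deg k (exp_ad t X) = 0"
proof -
  have z: "ad_pow d n (comp deg (k + int n) X) = 0" for n
  proof (cases "k + int n < 0")
    case True
    then show ?thesis using X by (simp add: nideal_def)
  next
    case False
    define m where "m = nat (k + int n + 1)"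
    have "comp deg (k + int n) X \<in> nker m" using X False by (simp add: nideal_def m_def)
    then have kill: "ad_pow d m (comp deg (k + int n) X) = 0" by (simp add: nker_def)
    have "m \<le> n" using k False by (simp add: m_def)
    then have "ad_pow d n (comp deg (k + int n) X) = ad_pow d (n - m) (ad_pow d m (comp deg (k + int n) X))"
      by (simp add: ad_pow_add_nat[symmetric])
    then show ?thesis using kill by simp
  qed
  show ?thesis by (simp add: exp_ad_def comp_sum comp_scale comp_ad_pow z)
qed

end

context sl2_triple
begin

lemma exp_ad_s_elt:
  "comp deg (-1) (exp_ad t (s_elt a b c)) = scaleM (a + 2 * b * t - c * t^2) d"
proof -
  define f where "f n = scaleM ((-t)^n / fact n) (ad_pow d n (comp deg (-1 + int n) (s_elt a b c)))" for n
  have "comp deg (-1) (exp_ad t (s_elt a b c)) = (\<Sum>n<nil_bound. f n)"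
    by (simp add: exp_ad_def comp_sum comp_scale comp_ad_pow f_def)
  also have "\<dots> = (\<Sum>n<3. f n)"
  proof (rule sum.mono_neutral_right)
    show "{..<3} \<subseteq> {..<nil_bound}" by (auto simp: nil_bound_def)
    show "\<forall>i\<in>{..<nil_bound} - {..<3}. f i = 0" by (auto simp: f_def comp_s_elt)
  qed simp
  also have "\<dots> = f 0 + f 1 + f 2"
    by (simp add: numeral_3_eq_3 numeral_2_eq_2)
  also have "\<dots> = scaleM (a + 2 * b * t - c * t^2) d"
  proof -
    have "f 0 = scaleM a d" by (simp add: f_def comp_s_elt)
    moreover have "f 1 = scaleM (-t * b * -2) d"
      by (simp add: f_def comp_s_elt ad_pow_Suc bracket_scale_r dH mult_ac)
    moreover have "f 2 = scaleM (t^2 / 2 * c * -2) d"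
      by (simp add: f_def comp_s_elt numeral_2_eq_2 ad_pow_Suc bracket_scale_r rdY dH mult_ac)
    ultimately show ?thesis by (simp add: vec_eq_iff algebra_simps)
  qed
  finally show ?thesis .
qed

text \<open>n_ne(m) = N: for X \<in> n_ne(m) write X = s + Z with Z \<in> N; then (a + 2bt - ct^2)\<delta> = 0
  for all t, forcing s = 0.\<close>
lemma nne_eq: "nne deg g d = nideal"
proof
  show "nideal \<subseteq> nne deg g d"
    using nideal_umax nideal_exp_ad by (auto simp: nne_iff)
next
  show "nne deg g d \<subseteq> nideal"
  proof
    fix X assume "X \<in> nne deg g d"
    then have XU: "X \<in> umax deg g d" and XF: "\<And>t k. k < 0 \<Longrightarrow> comp deg k (exp_ad t X) = 0"
      by (auto simp: nne_iff)
    obtain a b c where Z: "X - s_elt a b c \<in> nideal"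
      using decomposition_exists[OF XU] by blast
    have poly: "a + 2 * b * t - c * t^2 = 0" for t
    proof -
      have "exp_ad t (s_elt a b c) = exp_ad t X - exp_ad t (X - s_elt a b c)"
        using exp_ad_diff[of t X "X - s_elt a b c"] by simp
      then have "comp deg (-1) (exp_ad t (s_elt a b c)) = 0"
        by (simp add: comp_diff XF nideal_exp_ad[OF Z])
      then show ?thesis using dnz by (simp add: exp_ad_s_elt scaleM_eq_0_iff)
    qed
    have a: "a = 0" using poly[of 0] by simp
    have "2 * b - c = 0" "- 2 * b - c = 0" using poly[of 1] poly[of "-1"] a by simp_all
    then have "b = 0" "c = 0" by simp_all
    then have "s_elt a b c = 0" by (simp add: s_elt_def a)
    then show "X \<in> nideal" using Z by simp
  qed
qed

end

theorem proposition8p1: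
  fixes deg :: "'n::finite \<Rightarrow> int"
    and g :: "('a::field_char_0^'n^'n) set"
    and \<delta> H Y :: "'a^'n^'n"
  assumes neg: "\<forall>j. deg j < 0"
    and red: "reductive g"
    and grd: "graded_sub deg g"
    and d: "\<delta> \<in> g" "homog deg (-1) \<delta>" "\<delta> \<noteq> 0"
    and HY: "H \<in> g" "homog deg 0 H" "Y \<in> g" "homog deg 1 Y"
    and rel: "bracket H \<delta> = scaleM 2 \<delta>" "bracket H Y = scaleM (-2) Y" "bracket \<delta> Y = H"
  shows "(\<forall>a b c. scaleM a \<delta> + scaleM b H + scaleM c Y = 0 \<longrightarrow> a = 0 \<and> b = 0 \<and> c = 0)
    \<and> {scaleM a \<delta> + scaleM b H + scaleM c Y |a b c. True} \<subseteq> umax deg g \<delta>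
    \<and> lie_ideal (umax deg g \<delta>) (nmax deg g \<delta>)
    \<and> (\<forall>X \<in> umax deg g \<delta>. \<exists>!(a, b, c).
          X - (scaleM a \<delta> + scaleM b H + scaleM c Y) \<in> nmax deg g \<delta>)
    \<and> nmax deg g \<delta> = nne deg g \<delta>"
proof -
  have "lie_subalgebra g"
    using red by (simp add: reductive_def)
  then interpret sl2_triple deg \<delta> g H Y
    by unfold_locales (use d HY rel in auto)
  have s: "scaleM a \<delta> + scaleM b H + scaleM c Y = s_elt a b c" for a b c
    by (simp add: s_elt_def)
  show ?thesis
    unfolding s nmax_eq nne_eq
  proof (intro conjI)
    show "\<forall>a b c. s_elt a b c = 0 \<longrightarrow> a = 0 \<and> b = 0 \<and> c = 0"
      using s_elt_indep by blast
    show "{s_elt a b c |a b c. True} \<subseteq> umax deg g \<delta>"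
      using s_elt_umax by blast
    show "lie_ideal (umax deg g \<delta>) nideal"
      by (rule nideal_lie_ideal)
    show "\<forall>X\<in>umax deg g \<delta>. \<exists>!(a, b, c). X - s_elt a b c \<in> nideal"
      using decomposition_unique by blast
  qed simp
qed

end
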